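(* Let $q$ be a power of an odd prime $p$, $s\ge2$, and $n\ge s$ integers with $d_{\max\text{-}iso}(q;[n,s])\ge1$; let $\pi:\mathbb{F}_{q^s}\to\mathbb{F}_q^n$ be an isometry whose image $\pi(\mathbb{F}_{q^s})$ is an $[n,s,d]_q$ code with $d=d_{\max\text{-}iso}(q;[n,s])$. Let $a,b\in\mathbb{F}_{q^s}$ with $b\neq0$ and let $N\ge2$. Let $r\ge0$ be such that $p^r$ divides $N+1$ but $p^{r+1}$ does not, let $N+1=p^r(m+1)$, let $\theta\in\overline{\mathbb{F}}_q$ be a primitive $2(m+1)$-th root of unity, and let $\mu^2=-1$. Let $S_1=\{-\mu/b+\theta^i+\theta^{-i}:1\le i\le m\}\cup\{\mu/b+\theta^i+\theta^{-i}:1\le i\le m\}$ and $S_2=\{-\mu/b+2,-\mu/b-2,\mu/b+2,\mu/b-2\}$. Assume: if $r=0$, then $a/b\notin S_1$; if $r\ge1$ and $m=0$, then $a/b\notin S_2$; if $r\ge1$ and $m\ge1$, then $a/b\notin S_1\cup S_2$. Then $\pi^{\otimes 2N}(\hat C_N(a,b))$ is an LCD code over $\mathbb{F}_q$ with parameters $[2nN,sN,D^*]_q$, where $D^*\ge dD$ and $D$ is the minimum distance of $\hat C_N(a,b)$.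
   Context: For a field $K$, $a,b\in K$ and $N\ge 2$, $\hat T_N(a,b)$ is the $N\times N$ symmetric tridiagonal Toeplitz matrix with diagonal entries $a$, first super- and sub-diagonal entries $b$, other entries $0$; $\hat C_N(a,b)$ is the $[2N,N]$ linear code over $K$ (here $K=\mathbb{F}_{q^s}$) with generator matrix $[I_N\mid\hat T_N(a,b)]$. A linear code $C$ is LCD if $C\cap C^\perp=\{0\}$ (Euclidean dual). An $\mathbb{F}_q$-linear map $\pi:\mathbb{F}_{q^s}\to\mathbb{F}_q^n$ ($n\ge s\ge2$) is an isometry if there is an $\mathbb{F}_q$-basis $(e_1,\dots,e_s)$ of $\mathbb{F}_{q^s}$ with trace-dual basis $(e'_1,\dots,e'_s)$ such that $\pi(e_i)\cdot\pi(e'_j)=\delta_{ij}$ for all $i,j$ (standard inner product on $\mathbb{F}_q^n$). $d_{\max\text{-}iso}(q;[n,s])$ is the largest $d$ such that some isometry $\pi:\mathbb{F}_{q^s}\to\mathbb{F}_q^n$ has image $\pi(\mathbb{F}_{q^s})$ (an $[n,s]_q$ code) of minimum distance $d$. The map $\pi^{\otimes 2N}:\mathbb{F}_{q^s}^{2N}\to\mathbb{F}_q^{2Nn}$ is $(c_1,\dots,c_{2N})\mapsto(\pi(c_1),\dots,\pi(c_{2N}))$. *)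

theory Defs
  imports "HOL-Computational_Algebra.Primes"
begin

(* Vectors over a field are lists; a code of length len is a set of lists of length len. *)

definition dotp :: "'a::comm_ring list \<Rightarrow> 'a list \<Rightarrow> 'a" where
  "dotp u v = sum_list (map2 (*) u v)"

definition hamming_dist :: "'a list \<Rightarrow> 'a list \<Rightarrow> nat" where
  "hamming_dist x y = card {i. i < length x \<and> x ! i \<noteq> y ! i}"

definition min_dist :: "'a list set \<Rightarrow> nat" where
  "min_dist C = Min {hamming_dist x y | x y. x \<in> C \<and> y \<in> C \<and> x \<noteq> y}"

definition dual_code :: "nat \<Rightarrow> 'a::field list set \<Rightarrow> 'a list set" where
  "dual_code len C = {y. length y = len \<and> (\<forall>x\<in>C. dotp x y = 0)}"

definition is_LCD :: "nat \<Rightarrow> 'a::field list set \<Rightarrow> bool" where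
  "is_LCD len C \<longleftrightarrow> C \<inter> dual_code len C = {replicate len 0}"

definition ring_hom_fun :: "('a::field \<Rightarrow> 'b::field) \<Rightarrow> bool" where
  "ring_hom_fun h \<longleftrightarrow> h 1 = 1 \<and> (\<forall>x y. h (x + y) = h x + h y) \<and> (\<forall>x y. h (x * y) = h x * h y)"

(* symmetric tridiagonal Toeplitz matrix \<hat>T_N(a,b), indices 0..N-1 *)
definition tridiag :: "'a::field \<Rightarrow> 'a \<Rightarrow> nat \<Rightarrow> nat \<Rightarrow> 'a" where
  "tridiag a b i j = (if i = j then a else if i = j + 1 \<or> j = i + 1 then b else 0)"

(* the [2N,N] code with generator matrix [I_N | \<hat>T_N(a,b)] *)
definition hatC :: "nat \<Rightarrow> 'a::field \<Rightarrow> 'a \<Rightarrow> 'a list set" where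
  "hatC N a b = {u @ map (\<lambda>j. \<Sum>i<N. u ! i * tridiag a b i j) [0..<N] | u. length u = N}"

(* F_q = 'a embedded into F_{q^s} = 'b via emb; trace Tr: F_{q^s} \<rightarrow> F_q (values in emb ` UNIV) *)
definition trace_ext :: "nat \<Rightarrow> nat \<Rightarrow> 'b::field \<Rightarrow> 'b" where
  "trace_ext q s x = (\<Sum>i<s. x ^ (q ^ i))"

definition is_Fq_basis :: "('a::field \<Rightarrow> 'b::field) \<Rightarrow> nat \<Rightarrow> (nat \<Rightarrow> 'b) \<Rightarrow> bool" where
  "is_Fq_basis emb s e \<longleftrightarrow>
     (\<forall>x. \<exists>!c. (\<forall>i\<ge>s. c i = 0) \<and> x = (\<Sum>i<s. emb (c i) * e i))"

definition Fq_linear :: "('a::field \<Rightarrow> 'b::field) \<Rightarrow> nat \<Rightarrow> ('b \<Rightarrow> 'a list) \<Rightarrow> bool" where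
  "Fq_linear emb n \<pi> \<longleftrightarrow>
     (\<forall>x. length (\<pi> x) = n) \<and>
     (\<forall>x y. \<pi> (x + y) = map2 (+) (\<pi> x) (\<pi> y)) \<and>
     (\<forall>c x. \<pi> (emb c * x) = map ((*) c) (\<pi> x))"

definition is_isometry :: "('a::field \<Rightarrow> 'b::field) \<Rightarrow> nat \<Rightarrow> nat \<Rightarrow> nat \<Rightarrow> ('b \<Rightarrow> 'a list) \<Rightarrow> bool" where
  "is_isometry emb q s n \<pi> \<longleftrightarrow> Fq_linear emb n \<pi> \<and>
     (\<exists>e e'. is_Fq_basis emb s e \<and> is_Fq_basis emb s e' \<and>
        (\<forall>i<s. \<forall>j<s. trace_ext q s (e i * e' j) = (if i = j then 1 else 0)) \<and>
        (\<forall>i<s. \<forall>j<s. dotp (\<pi> (e i)) (\<pi> (e' j)) = (if i = j then 1 else 0)))"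

definition d_max_iso :: "('a::field \<Rightarrow> 'b::field) \<Rightarrow> nat \<Rightarrow> nat \<Rightarrow> nat \<Rightarrow> nat" where
  "d_max_iso emb q s n = Max {d. \<exists>\<pi>. is_isometry emb q s n \<pi> \<and> min_dist (range \<pi>) = d}"

definition pi_tensor :: "('b \<Rightarrow> 'a list) \<Rightarrow> 'b list \<Rightarrow> 'a list" where
  "pi_tensor \<pi> c = concat (map \<pi> c)"

end

theory Submission
  imports Defs "HOL-Computational_Algebra.Polynomial_Factorial" "HOL-Number_Theory.Residues"
begin

text \<open>A codeword \<open>u [I | T]\<close>, \<open>T\<close> the tridiagonal Toeplitz matrix, lies in the dual code iff
  \<open>(I + T^2) u = 0\<close>. With \<open>\<mu>^2 = -1\<close> we have \<open>I + T^2 = (T + \<mu>) (T - \<mu>)\<close>, and a tridiagonal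
  Toeplitz matrix with diagonal \<open>\<alpha>\<close> and off-diagonal \<open>\<beta> \<noteq> 0\<close> is singular iff \<open>U_N(\<alpha>/(2\<beta>)) = 0\<close>,
  \<open>U_N\<close> the Chebyshev polynomial of the second kind, because a kernel vector obeys the Chebyshev
  recurrence. In characteristic \<open>p\<close> with \<open>N + 1 = p^r (m + 1)\<close>, \<open>U_N(x/2) = 0\<close> makes
  \<open>X^2 - x X + 1\<close> divide \<open>X^(2(N+1)) - 1 = (X^(2(m+1)) - 1)^(p^r)\<close>, so \<open>x = \<theta>^i + \<theta>^-i\<close>. The
  hypothesis on \<open>a/b\<close> excludes exactly these values, hence the code is LCD.

  An isometry turns inner products into traces, \<open>\<pi> x \<bullet> \<pi> y = Tr(x y)\<close>. The trace form is
  nondegenerate and the code is linear over the large field, so its image under \<open>\<pi>\<close> applied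
  symbol-wise is again LCD, and each differing symbol contributes at least \<open>d\<close> to the distance.\<close>

section \<open>Chebyshev polynomials and their roots in characteristic \<open>p\<close>\<close>

text \<open>\<open>cheb x j = U_j(x/2)\<close>; it is also the determinant of the \<open>j \<times> j\<close> tridiagonal Toeplitz matrix
  with diagonal \<open>x\<close> and off-diagonal \<open>1\<close>.\<close>

fun cheb :: "'c::comm_ring_1 \<Rightarrow> nat \<Rightarrow> 'c" where
  "cheb x 0 = 1"
| "cheb x (Suc 0) = x"
| "cheb x (Suc (Suc j)) = x * cheb x (Suc j) - cheb x j"

lemma cheb_cassini: "cheb x (Suc j) ^ 2 - cheb x (Suc (Suc j)) * cheb x j = 1"
  by (induction j) (simp_all add: power2_eq_square algebra_simps)

lemma cheb_minus: "cheb (- x) j = (- 1) ^ j * cheb x j"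
  by (induction x j rule: cheb.induct) (auto simp: algebra_simps)

lemma cheb_two: "cheb 2 j = of_nat (j + 1)"
  by (induction "2::'c::comm_ring_1" j rule: cheb.induct) (auto simp: algebra_simps)

lemma X_power_mod_cheb:
  fixes x :: "'c::comm_ring_1"
  shows "[:1, - x, 1:] dvd [:0, 1:] ^ Suc (Suc j) - [:- cheb x j, cheb x (Suc j):]"
proof (induction j)
  case 0
  show ?case by (simp add: power2_eq_square)
next
  case (Suc j)
  have eq: "[:0, 1:] ^ Suc (Suc (Suc j)) - [:- cheb x (Suc j), cheb x (Suc (Suc j)):]
      = [:0, 1:] * ([:0, 1:] ^ Suc (Suc j) - [:- cheb x j, cheb x (Suc j):])
        + Polynomial.smult (cheb x (Suc j)) [:1, - x, 1:]"
    by (simp add: algebra_simps)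
  show ?case
    unfolding eq by (rule dvd_add[OF dvd_mult[OF Suc.IH] Polynomial.dvd_smult[OF dvd_refl]])
qed

lemma cheb_zero_imp_dvd_X_power_minus_one:
  fixes x :: "'c::comm_ring_1"
  assumes "cheb x N = 0"
  shows "[:1, - x, 1:] dvd [:0, 1:] ^ (2 * (N + 1)) - 1"
proof -
  obtain n where N: "N = Suc n"
    using assms by (cases N) auto
  define c where "c = cheb x n"
  have "cheb x (Suc (Suc n)) = - c"
    using assms by (simp add: N c_def)
  then have c2: "c * c = 1"
    using cheb_cassini[of x n] assms by (simp add: N c_def power2_eq_square)
  have dvd: "[:1, - x, 1:] dvd [:0, 1:] ^ (N + 1) - [:- c:]"
    using X_power_mod_cheb[of x n] assms by (simp add: N c_def)
  have difference_of_squares: "Z ^ (2 * (N + 1)) - 1 = (Z ^ (N + 1) - C) * (Z ^ (N + 1) + C)"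
    if "C * C = 1" for Z C :: "'c poly"
    using that by (simp add: algebra_simps power_mult mult.commute[of 2] power2_eq_square)
  have factor: "[:0, 1:] ^ (2 * (N + 1)) - 1
      = ([:0, 1:] ^ (N + 1) - [:- c:]) * ([:0, 1:] ^ (N + 1) + [:- c:])"
  proof (rule difference_of_squares)
    show "[:- c:] * [:- c:] = 1"
      using c2 by (simp flip: one_pCons)
  qed
  show ?thesis
    unfolding factor by (rule dvd_mult2[OF dvd])
qed

lemma prod_X_minus_powers_dvd:
  fixes \<theta> :: "'c::idom"
  assumes "\<theta> ^ M = 1" and "\<And>j. 0 < j \<Longrightarrow> j < M \<Longrightarrow> \<theta> ^ j \<noteq> 1" and "k \<le> M"
  shows "(\<Prod>i<k. [:- (\<theta> ^ i), 1:]) dvd [:0, 1:] ^ M - 1"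
  using assms(3)
proof (induction k)
  case 0
  then show ?case by simp
next
  case (Suc k)
  then obtain R where R: "[:0, 1:] ^ M - 1 = (\<Prod>i<k. [:- (\<theta> ^ i), 1:]) * R"
    by auto
  have "\<theta> \<noteq> 0"
    using assms(1) Suc.prems by (cases M) auto
  have "\<theta> ^ k \<noteq> \<theta> ^ i" if "i < k" for i
  proof
    assume "\<theta> ^ k = \<theta> ^ i"
    then have "\<theta> ^ i * \<theta> ^ (k - i) = \<theta> ^ i * 1"
      using that by (simp flip: power_add)
    then show False
      using assms(2)[of "k - i"] \<open>\<theta> \<noteq> 0\<close> that Suc.prems by simp
  qed
  then have "poly (\<Prod>i<k. [:- (\<theta> ^ i), 1:]) (\<theta> ^ k) \<noteq> 0"
    by (simp add: poly_prod)
  moreover have "poly ([:0, 1:] ^ M - 1) (\<theta> ^ k) = 0"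
    using assms(1) by (simp add: poly_power flip: power_mult) (simp add: mult.commute power_mult)
  ultimately have "poly R (\<theta> ^ k) = 0"
    by (simp add: R)
  then obtain R' where "R = [:- (\<theta> ^ k), 1:] * R'"
    by (auto simp: poly_eq_0_iff_dvd)
  then have "[:0, 1:] ^ M - 1 = (\<Prod>i<Suc k. [:- (\<theta> ^ i), 1:]) * R'"
    by (simp only: R prod.lessThan_Suc mult.assoc)
  then show ?case
    by (metis dvd_triv_left)
qed

lemma minus_one_power_CHAR:
  assumes "CHAR('a::comm_ring_1) = p" and "prime p"
  shows "(- 1 :: 'a) ^ (p ^ r) = - 1"
proof -
  have "(1 + (- 1 :: 'a)) ^ (p ^ r) = 1 ^ (p ^ r) + (- 1) ^ (p ^ r)"
    by (rule freshmans_dream') (use assms in simp_all)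
  then show ?thesis
    using prime_gt_0_nat[OF assms(2)] by (simp add: eq_neg_iff_add_eq_0 add.commute power_0_left)
qed

lemma X_power_minus_one_power_CHAR:
  assumes "CHAR('a::comm_ring_1) = p" and "prime p"
  shows "([:0, 1:] ^ M - 1 :: 'a poly) ^ (p ^ r) = [:0, 1:] ^ (M * p ^ r) - 1"
proof -
  have CHAR: "CHAR('a poly) = p"
    using assms by simp
  have "([:0, 1:] ^ M + (- 1) :: 'a poly) ^ (p ^ r) = ([:0, 1:] ^ M) ^ (p ^ r) + (- 1) ^ (p ^ r)"
    by (rule freshmans_dream') (use CHAR assms in simp_all)
  then show ?thesis
    using minus_one_power_CHAR[OF CHAR assms(2)] by (simp add: power_mult)
qed

lemma X_power_minus_one_eq_prod:
  fixes \<theta> :: "'c::field"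
  assumes "M > 0" and "\<theta> ^ M = 1" and "\<And>j. 0 < j \<Longrightarrow> j < M \<Longrightarrow> \<theta> ^ j \<noteq> 1"
  shows "[:0, 1:] ^ M - 1 = (\<Prod>i<M. [:- (\<theta> ^ i), 1:])"
proof -
  define P where "P = (\<Prod>i<M. [:- (\<theta> ^ i), 1:])"
  obtain R where R: "[:0, 1:] ^ M - 1 = P * R"
    using prod_X_minus_powers_dvd[OF assms(2,3), of M] unfolding P_def by auto
  have "[:0, 1:] ^ M - 1 = Polynomial.monom (1::'c) M + (- 1)"
    by (simp add: monom_altdef)
  moreover have deg_monic: "degree (Polynomial.monom (1::'c) M + (- 1)) = M"
    using \<open>M > 0\<close> by (subst degree_add_eq_left) (simp_all add: degree_monom_eq)
  moreover have "lead_coeff (Polynomial.monom (1::'c) M + (- 1)) = 1"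
    using \<open>M > 0\<close> by (simp only: deg_monic) simp
  ultimately have deg: "degree (P * R) = M" and lc: "lead_coeff (P * R) = 1"
    by (simp_all only: R)
  have "P \<noteq> 0" "degree P = M"
    unfolding P_def by (simp_all add: degree_prod_eq_sum_degree)
  moreover have "lead_coeff P = 1"
    unfolding P_def by (simp only: lead_coeff_prod) simp
  moreover have "R \<noteq> 0"
    using deg \<open>M > 0\<close> by auto
  ultimately have "degree R = 0"
    using deg by (simp add: degree_mult_eq)
  moreover have "lead_coeff R = 1"
    using lc \<open>lead_coeff P = 1\<close> by (simp only: lead_coeff_mult mult_1)
  ultimately have "R = 1"
    by (elim degree_eq_zeroE) (simp add: one_pCons)
  then show ?thesis
    using R P_def by simp
qed

lemma dvd_linear_mult_cancel:
  fixes f :: "'c::field poly"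
  assumes "poly f c \<noteq> 0" and "f dvd [:- c, 1:] * g"
  shows "f dvd g"
proof -
  define r where "r = poly f c"
  obtain S where f: "f = [:- c, 1:] * S + [:r:]"
    unfolding r_def using synthetic_div_correct' by metis
  have "[:r:] * g = f * g - [:- c, 1:] * g * S"
    by (simp add: f algebra_simps)
  then have "f dvd [:r:] * g"
    using assms(2) by (simp add: dvd_diff)
  then have "f dvd Polynomial.smult (inverse r) ([:r:] * g)"
    by (rule Polynomial.dvd_smult)
  then show ?thesis
    using assms(1) r_def by simp
qed

lemma dvd_prod_linear_power_imp_root:
  fixes f :: "'c::field poly"
  assumes "finite A" and "f dvd (\<Prod>i\<in>A. [:- z i, 1:] ^ k)" and "degree f > 0"
  shows "\<exists>i\<in>A. poly f (z i) = 0"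
proof (rule ccontr)
  assume no_root: "\<not> ?thesis"
  have power_cancel: "f dvd g" if "i \<in> A" and "f dvd [:- z i, 1:] ^ l * g" for i l g
    using that(2)
  proof (induction l arbitrary: g)
    case (Suc l)
    have "poly f (z i) \<noteq> 0"
      using no_root \<open>i \<in> A\<close> by blast
    moreover have "f dvd [:- z i, 1:] * ([:- z i, 1:] ^ l * g)"
      using Suc.prems by (simp only: power_Suc mult.assoc)
    ultimately have "f dvd [:- z i, 1:] ^ l * g"
      by (rule dvd_linear_mult_cancel)
    then show ?case
      by (rule Suc.IH)
  qed simp
  have "f dvd (\<Prod>i\<in>B. [:- z i, 1:] ^ k) \<Longrightarrow> f dvd 1" if "B \<subseteq> A" for B
    using finite_subset[OF that assms(1)] that
  proof (induction B rule: finite_induct)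
    case (insert i B)
    then show ?case
      using power_cancel[of i k "\<Prod>i\<in>B. [:- z i, 1:] ^ k"] by simp
  qed simp
  then have "f dvd 1"
    using assms(2) by blast
  then show False
    using assms(3) dvd_imp_degree_le[of f 1] by simp
qed

lemma dvd_X_power_minus_one_power_imp_root:
  fixes f :: "'c::field poly" and \<theta> :: 'c
  assumes "M > 0" and "\<theta> ^ M = 1" and "\<And>j. 0 < j \<Longrightarrow> j < M \<Longrightarrow> \<theta> ^ j \<noteq> 1"
    and "f dvd ([:0, 1:] ^ M - 1) ^ k" and "degree f > 0"
  shows "\<exists>j<M. poly f (\<theta> ^ j) = 0"
proof -
  have "f dvd (\<Prod>i<M. [:- (\<theta> ^ i), 1:] ^ k)"
    using assms(4) by (simp only: X_power_minus_one_eq_prod[OF assms(1-3)] prod_power_distrib)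
  then show ?thesis
    using dvd_prod_linear_power_imp_root[of "{..<M}" f "\<lambda>i. \<theta> ^ i" k] assms(5) by auto
qed

lemma cheb_zero_imp_root_of_unity_sum:
  fixes x \<theta> :: "'c::field"
  assumes "CHAR('c) = p" "prime p" and "2 * (N + 1) = M * p ^ r"
    and "\<theta> ^ M = 1" and "\<And>j. 0 < j \<Longrightarrow> j < M \<Longrightarrow> \<theta> ^ j \<noteq> 1"
    and "cheb x N = 0"
  shows "\<exists>j<M. x = \<theta> ^ j + inverse \<theta> ^ j"
proof -
  have M: "M > 0"
    using assms(3) by (cases M) auto
  have "[:1, - x, 1:] dvd ([:0, 1:] ^ M - 1) ^ (p ^ r)"
    using cheb_zero_imp_dvd_X_power_minus_one[OF assms(6)]
    by (simp add: X_power_minus_one_power_CHAR[OF assms(1,2)] flip: assms(3))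
  then obtain j where "j < M" and root: "poly [:1, - x, 1:] (\<theta> ^ j) = 0"
    using dvd_X_power_minus_one_power_imp_root[OF M assms(4,5)] by fastforce
  have "\<theta> ^ j \<noteq> 0"
    using assms(4) M by (cases M) auto
  moreover have "1 - x * \<theta> ^ j + \<theta> ^ j * \<theta> ^ j = 0"
    using root by (simp add: algebra_simps)
  ultimately have "x = \<theta> ^ j + inverse \<theta> ^ j"
    by (simp add: power_inverse field_simps)
  with \<open>j < M\<close> show ?thesis
    by blast
qed

lemma root_of_unity_sum_cases:
  fixes \<theta> :: "'c::field"
  assumes "\<theta> ^ (2 * (m + 1)) = 1" and "\<And>j. 0 < j \<Longrightarrow> j < 2 * (m + 1) \<Longrightarrow> \<theta> ^ j \<noteq> 1"
    and "j < 2 * (m + 1)"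
  shows "\<theta> ^ j + inverse \<theta> ^ j = 2 \<or> \<theta> ^ j + inverse \<theta> ^ j = - 2 \<or>
    (\<exists>i. 1 \<le> i \<and> i \<le> m \<and> \<theta> ^ j + inverse \<theta> ^ j = \<theta> ^ i + inverse \<theta> ^ i)"
proof -
  consider "j = 0" | "1 \<le> j" "j \<le> m" | "j = m + 1" | "m + 1 < j"
    by linarith
  then show ?thesis
  proof cases
    case 1
    then show ?thesis by simp
  next
    case 2
    then show ?thesis by blast
  next
    case 3
    have "(\<theta> ^ j - 1) * (\<theta> ^ j + 1) = 0"
      using assms(1) 3 by (simp add: algebra_simps flip: power_add mult_2)
    moreover have "\<theta> ^ j \<noteq> 1"
      using assms(2)[of j] 3 by auto
    ultimately have "\<theta> ^ j = - 1"
      by (simp add: eq_neg_iff_add_eq_0)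
    then have "inverse \<theta> ^ j = - 1"
      by (metis power_inverse inverse_minus_eq inverse_1)
    then show ?thesis
      using \<open>\<theta> ^ j = - 1\<close> by simp
  next
    case 4
    define i where "i = 2 * (m + 1) - j"
    have "1 \<le> i" "i \<le> m"
      using 4 assms(3) unfolding i_def by auto
    have "\<theta> ^ j * \<theta> ^ i = 1"
      using assms(1,3) unfolding i_def by (simp flip: power_add)
    then have "inverse \<theta> ^ j = \<theta> ^ i" "\<theta> ^ j = inverse \<theta> ^ i"
      by (simp_all add: power_inverse inverse_unique)
        (metis inverse_unique mult.commute)
    then show ?thesis
      using \<open>1 \<le> i\<close> \<open>i \<le> m\<close> by (auto simp: add.commute)
  qed
qed

lemma cheb_root_cases:
  fixes x \<theta> :: "'c::field"
  assumes "CHAR('c) = p" "prime p"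
    and "N + 1 = p ^ r * (m + 1)" and "\<not> p ^ (r + 1) dvd N + 1"
    and "\<theta> ^ (2 * (m + 1)) = 1" and "\<And>j. 0 < j \<Longrightarrow> j < 2 * (m + 1) \<Longrightarrow> \<theta> ^ j \<noteq> 1"
    and "cheb x N = 0"
  shows "(\<exists>i. 1 \<le> i \<and> i \<le> m \<and> x = \<theta> ^ i + inverse \<theta> ^ i) \<or> (r \<ge> 1 \<and> (x = 2 \<or> x = - 2))"
proof -
  have "2 * (N + 1) = 2 * (m + 1) * p ^ r"
    using assms(3) by simp
  then obtain j where "j < 2 * (m + 1)" and x: "x = \<theta> ^ j + inverse \<theta> ^ j"
    using cheb_zero_imp_root_of_unity_sum[OF assms(1,2) _ assms(5,6,7)] by blast
  have "r \<ge> 1" if "x = 2 \<or> x = - 2"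
  proof (rule ccontr)
    assume "\<not> r \<ge> 1"
    then have "\<not> p dvd N + 1"
      using assms(4) by (simp add: not_less_eq_eq)
    moreover have "cheb x N = of_nat (N + 1) \<or> cheb x N = - of_nat (N + 1)"
      using that cheb_two[of N] cheb_minus[of "2::'c" N] by (auto simp: minus_one_power_iff)
    then have "of_nat (N + 1) = (0::'c)"
      using assms(7) by (metis neg_0_equal_iff_equal)
    ultimately show False
      using assms(1) of_nat_eq_0_iff_char_dvd by blast
  qed
  then show ?thesis
    using root_of_unity_sum_cases[OF assms(5,6) \<open>j < 2 * (m + 1)\<close>] x by auto
qed

section \<open>Singular tridiagonal Toeplitz matrices\<close>

lemma tridiag_sym: "tridiag \<alpha> \<beta> i j = tridiag \<alpha> \<beta> j i"
  by (auto simp: tridiag_def)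

lemma sum_tridiag:
  fixes w :: "nat \<Rightarrow> 'c::field"
  assumes "k < N"
  shows "(\<Sum>j<N. w j * tridiag \<alpha> \<beta> j k) = \<alpha> * w k + (if 0 < k then \<beta> * w (k - 1) else 0)
           + (if k + 1 < N then \<beta> * w (k + 1) else 0)"
proof -
  have "w j * tridiag \<alpha> \<beta> j k = (if j = k then \<alpha> * w j else 0) + (if j = k + 1 then \<beta> * w j else 0)
        + (if 0 < k then (if j = k - 1 then \<beta> * w j else 0) else 0)" for j
    by (auto simp: tridiag_def)
  then have "(\<Sum>j<N. w j * tridiag \<alpha> \<beta> j k) = (\<Sum>j<N. if j = k then \<alpha> * w j else 0)
      + (\<Sum>j<N. if j = k + 1 then \<beta> * w j else 0)
      + (\<Sum>j<N. if 0 < k then (if j = k - 1 then \<beta> * w j else 0) else 0)"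
    by (simp add: sum.distrib)
  also have "\<dots> = \<alpha> * w k + (if k + 1 < N then \<beta> * w (k + 1) else 0) + (if 0 < k then \<beta> * w (k - 1) else 0)"
    using assms by (simp add: sum.delta, linarith)
  finally show ?thesis
    by (simp add: algebra_simps)
qed

lemma sum_tridiag_add_diag:
  fixes w :: "nat \<Rightarrow> 'c::field"
  assumes "k < N"
  shows "(\<Sum>j<N. w j * tridiag (\<alpha> + c) \<beta> j k) = (\<Sum>j<N. w j * tridiag \<alpha> \<beta> j k) + c * w k"
proof -
  have "w j * tridiag (\<alpha> + c) \<beta> j k = w j * tridiag \<alpha> \<beta> j k + (if j = k then c * w j else 0)" for j
    by (simp add: tridiag_def algebra_simps)
  then show ?thesis
    using assms by (simp add: sum.distrib)
qed

lemma tridiag_left_kernel_eq_cheb: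
  fixes w :: "nat \<Rightarrow> 'c::field"
  assumes "\<beta> \<noteq> 0" and kernel: "\<forall>k<N. (\<Sum>j<N. w j * tridiag \<alpha> \<beta> j k) = 0" and "j < N"
  shows "w j = w 0 * cheb (- \<alpha> / \<beta>) j"
proof -
  define z where "z = - \<alpha> / \<beta>"
  have step: "w (k + 1) = z * w k - (if 0 < k then w (k - 1) else 0)" if "k + 1 < N" for k
  proof -
    have "\<alpha> * w k + (if 0 < k then \<beta> * w (k - 1) else 0) + \<beta> * w (k + 1) = 0"
      using kernel sum_tridiag[of k N w \<alpha> \<beta>] that by simp
    then have "\<beta> * w (k + 1) = - (\<alpha> * w k + (if 0 < k then \<beta> * w (k - 1) else 0))"
      by (rule add.inverse_unique[symmetric])
    then show ?thesis
      using assms(1) unfolding z_def by (cases "0 < k") (simp_all add: field_simps)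
  qed
  have "w j = w 0 * cheb z j \<and> (j + 1 < N \<longrightarrow> w (j + 1) = w 0 * cheb z (j + 1))"
    using assms(3)
  proof (induction j)
    case 0
    then show ?case
      using step[of 0] by (simp add: mult.commute)
  next
    case (Suc j)
    then show ?case
      using step[of "Suc j"] by (simp add: algebra_simps)
  qed
  then show ?thesis
    unfolding z_def by simp
qed

lemma tridiag_left_kernel_imp_cheb_zero:
  fixes w :: "nat \<Rightarrow> 'c::field"
  assumes "\<beta> \<noteq> 0" and "N \<ge> 2"
    and kernel: "\<forall>k<N. (\<Sum>j<N. w j * tridiag \<alpha> \<beta> j k) = 0" and "\<exists>k<N. w k \<noteq> 0"
  shows "cheb (\<alpha> / \<beta>) N = 0"
proof -
  define z where "z = - \<alpha> / \<beta>"
  have w: "w j = w 0 * cheb z j" if "j < N" for j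
    unfolding z_def by (rule tridiag_left_kernel_eq_cheb[OF assms(1) kernel that])
  obtain n where N: "N = Suc (Suc n)"
    using assms(2) by (metis add_2_eq_Suc le_Suc_ex)
  have "\<alpha> * w (Suc n) + \<beta> * w n = 0"
    using kernel sum_tridiag[of "Suc n" N w \<alpha> \<beta>] by (simp add: N)
  then have "\<beta> * w n = - (\<alpha> * w (Suc n))"
    by (simp add: add.inverse_unique add.commute)
  then have "w 0 * cheb z N = 0"
    using w[of n] w[of "Suc n"] assms(1) unfolding N z_def by (simp add: field_simps)
  moreover have "w 0 \<noteq> 0"
    using w assms(4) by auto
  ultimately have "cheb z N = 0"
    by simp
  then show ?thesis
    using cheb_minus[of z N] unfolding z_def by simp
qed

text \<open>Since \<open>I + T\<^sup>2 = (T + \<mu>) (T - \<mu>)\<close>, either \<open>U T - \<mu> U\<close> is a nonzero left kernel vector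
  of \<open>T + \<mu>\<close>, or \<open>U\<close> is one of \<open>T - \<mu>\<close>.\<close>

lemma one_plus_tridiag_sq_kernel_imp_cheb_zero:
  fixes U :: "nat \<Rightarrow> 'c::field"
  assumes kernel: "\<forall>k<N. U k + (\<Sum>j<N. (\<Sum>i<N. U i * tridiag \<alpha> \<beta> i j) * tridiag \<alpha> \<beta> k j) = 0"
    and "\<mu> ^ 2 = - 1" and "\<beta> \<noteq> 0" and "N \<ge> 2" and "\<exists>k<N. U k \<noteq> 0"
  shows "cheb ((\<alpha> + \<mu>) / \<beta>) N = 0 \<or> cheb ((\<alpha> - \<mu>) / \<beta>) N = 0"
proof -
  define V where "V j = (\<Sum>i<N. U i * tridiag \<alpha> \<beta> i j)" for j
  define w where "w j = V j - \<mu> * U j" for j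
  have VT: "(\<Sum>j<N. V j * tridiag \<alpha> \<beta> j k) = - U k" if "k < N" for k
  proof -
    have "(\<Sum>j<N. V j * tridiag \<alpha> \<beta> j k) = (\<Sum>j<N. V j * tridiag \<alpha> \<beta> k j)"
      by (simp only: tridiag_sym[of \<alpha> \<beta> _ k])
    then show ?thesis
      using kernel that unfolding V_def by (simp add: eq_neg_iff_add_eq_0 add.commute)
  qed
  have "\<mu> * \<mu> = - 1"
    using assms(2) by (simp add: power2_eq_square)
  show ?thesis
  proof (cases "\<exists>k<N. w k \<noteq> 0")
    case True
    have "(\<Sum>j<N. w j * tridiag (\<alpha> + \<mu>) \<beta> j k) = 0" if "k < N" for k
    proof -
      have "(\<Sum>j<N. w j * tridiag (\<alpha> + \<mu>) \<beta> j k) = (\<Sum>j<N. w j * tridiag \<alpha> \<beta> j k) + \<mu> * w k"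
        by (rule sum_tridiag_add_diag[OF that])
      also have "(\<Sum>j<N. w j * tridiag \<alpha> \<beta> j k)
          = (\<Sum>j<N. V j * tridiag \<alpha> \<beta> j k) - \<mu> * (\<Sum>j<N. U j * tridiag \<alpha> \<beta> j k)"
        unfolding w_def by (simp add: algebra_simps sum_subtractf sum_distrib_left)
      also have "\<dots> + \<mu> * w k = 0"
        using VT[OF that] \<open>\<mu> * \<mu> = - 1\<close> unfolding w_def V_def[symmetric]
        by (simp add: algebra_simps flip: mult.assoc)
      finally show ?thesis .
    qed
    then show ?thesis
      using tridiag_left_kernel_imp_cheb_zero[OF assms(3,4) _ True] by blast
  next
    case False
    then have "(\<Sum>j<N. U j * tridiag (\<alpha> + (- \<mu>)) \<beta> j k) = 0" if "k < N" for k
      using that unfolding w_def by (simp only: sum_tridiag_add_diag V_def[symmetric]) simp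
    then show ?thesis
      using tridiag_left_kernel_imp_cheb_zero[OF assms(3,4) _ assms(5)] by auto
  qed
qed

lemma cheb_shifted_quotient_nonzero:
  fixes A B \<theta> \<mu> \<nu> :: "'c::field"
  assumes "CHAR('c) = p" "prime p"
    and "N + 1 = p ^ r * (m + 1)" and "\<not> p ^ (r + 1) dvd N + 1"
    and "\<theta> ^ (2 * (m + 1)) = 1" and "\<And>j. 0 < j \<Longrightarrow> j < 2 * (m + 1) \<Longrightarrow> \<theta> ^ j \<noteq> 1"
    and "B \<noteq> 0"
    and S: "let S1 = {- \<mu> / B + \<theta> ^ i + inverse \<theta> ^ i | i. 1 \<le> i \<and> i \<le> m}
                    \<union> {\<mu> / B + \<theta> ^ i + inverse \<theta> ^ i | i. 1 \<le> i \<and> i \<le> m};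
                S2 = {- \<mu> / B + 2, - \<mu> / B - 2, \<mu> / B + 2, \<mu> / B - 2};
                ab = A / B
            in (r = 0 \<longrightarrow> ab \<notin> S1) \<and>
               (r \<ge> 1 \<and> m = 0 \<longrightarrow> ab \<notin> S2) \<and>
               (r \<ge> 1 \<and> m \<ge> 1 \<longrightarrow> ab \<notin> S1 \<union> S2)"
    and "\<nu> = \<mu> \<or> \<nu> = - \<mu>"
  shows "cheb ((A - \<nu>) / B) N \<noteq> 0"
proof
  assume root: "cheb ((A - \<nu>) / B) N = 0"
  define S1 where "S1 = {- \<mu> / B + \<theta> ^ i + inverse \<theta> ^ i | i. 1 \<le> i \<and> i \<le> m}
                    \<union> {\<mu> / B + \<theta> ^ i + inverse \<theta> ^ i | i. 1 \<le> i \<and> i \<le> m}"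
  define S2 where "S2 = {- \<mu> / B + 2, - \<mu> / B - 2, \<mu> / B + 2, \<mu> / B - 2}"
  have excluded: "(r = 0 \<longrightarrow> A / B \<notin> S1) \<and> (r \<ge> 1 \<and> m = 0 \<longrightarrow> A / B \<notin> S2) \<and>
      (r \<ge> 1 \<and> m \<ge> 1 \<longrightarrow> A / B \<notin> S1 \<union> S2)"
    using S unfolding Let_def S1_def S2_def .
  have AB: "A / B = \<nu> / B + (A - \<nu>) / B"
    using assms(7) by (simp add: field_simps)
  have \<nu>: "\<nu> / B = \<mu> / B \<or> \<nu> / B = - \<mu> / B"
    using assms(9) by auto
  from cheb_root_cases[OF assms(1-6) root] show False
  proof
    assume "\<exists>i. 1 \<le> i \<and> i \<le> m \<and> (A - \<nu>) / B = \<theta> ^ i + inverse \<theta> ^ i"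
    then obtain i where i: "1 \<le> i" "i \<le> m" and "(A - \<nu>) / B = \<theta> ^ i + inverse \<theta> ^ i"
      by blast
    then have "A / B = \<nu> / B + \<theta> ^ i + inverse \<theta> ^ i"
      using AB by (simp add: add.assoc)
    then have "A / B \<in> S1"
      using i \<nu> unfolding S1_def by auto
    then show False
      using excluded i by (cases "r = 0") auto
  next
    assume "r \<ge> 1 \<and> ((A - \<nu>) / B = 2 \<or> (A - \<nu>) / B = - 2)"
    then have "r \<ge> 1" "A / B \<in> S2"
      using AB \<nu> unfolding S2_def by auto
    then show False
      using excluded by (cases "m = 0") auto
  qed
qed

section \<open>Field homomorphisms and finite fields\<close>

lemma ring_hom_fun_add: "ring_hom_fun h \<Longrightarrow> h (x + y) = h x + h y"
  unfolding ring_hom_fun_def by blast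

lemma ring_hom_fun_mult: "ring_hom_fun h \<Longrightarrow> h (x * y) = h x * h y"
  unfolding ring_hom_fun_def by blast

lemma ring_hom_fun_one: "ring_hom_fun h \<Longrightarrow> h 1 = 1"
  unfolding ring_hom_fun_def by blast

lemma ring_hom_fun_zero: "ring_hom_fun h \<Longrightarrow> h 0 = 0"
  using ring_hom_fun_add[of h 0 0] by (metis add.right_neutral add_left_cancel)

lemma ring_hom_fun_sum: "ring_hom_fun h \<Longrightarrow> h (\<Sum>i\<in>A. f i) = (\<Sum>i\<in>A. h (f i))"
  using sum_comp_morphism[of h f A] by (simp add: ring_hom_fun_zero ring_hom_fun_add comp_def)

lemma ring_hom_fun_power: "ring_hom_fun h \<Longrightarrow> h (x ^ n) = h x ^ n"
  by (induction n) (simp_all add: ring_hom_fun_one ring_hom_fun_mult)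

lemma ring_hom_fun_of_nat: "ring_hom_fun h \<Longrightarrow> h (of_nat n) = of_nat n"
  by (induction n) (simp_all add: ring_hom_fun_zero ring_hom_fun_add ring_hom_fun_one)

lemma ring_hom_fun_eq_0_iff:
  assumes "ring_hom_fun h"
  shows "h x = 0 \<longleftrightarrow> x = 0"
proof
  assume "h x = 0"
  show "x = 0"
  proof (rule ccontr)
    assume "x \<noteq> 0"
    then have "h x * h (inverse x) = 1"
      using assms by (simp flip: ring_hom_fun_mult add: ring_hom_fun_one)
    with \<open>h x = 0\<close> show False
      by simp
  qed
qed (simp add: assms ring_hom_fun_zero)

lemma ring_hom_fun_tridiag: "ring_hom_fun h \<Longrightarrow> h (tridiag a b i j) = tridiag (h a) (h b) i j"
  by (simp add: tridiag_def ring_hom_fun_zero)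

lemma ring_hom_fun_CHAR:
  fixes h :: "'a::field \<Rightarrow> 'b::field"
  assumes "ring_hom_fun h"
  shows "CHAR('b) = CHAR('a)"
proof -
  have "of_nat n = (0::'b) \<longleftrightarrow> of_nat n = (0::'a)" for n
    using ring_hom_fun_of_nat[OF assms, of n] ring_hom_fun_eq_0_iff[OF assms, of "of_nat n"] by simp
  then show ?thesis
    by (intro CHAR_eqI) (simp_all add: of_nat_eq_0_iff_char_dvd)
qed

lemma CHAR_eq_prime_of_card:
  assumes "card (UNIV :: 'a::{field,finite} set) = p ^ k" and "prime p" and "k \<ge> 1"
  shows "CHAR('a) = p"
proof -
  have "prime CHAR('a)"
    by (intro prime_CHAR_semidom finite_imp_CHAR_pos) simp
  moreover have "CHAR('a) dvd p ^ k"
    using CHAR_dvd_CARD[where 'a = 'a] assms(1) by simp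
  ultimately show ?thesis
    using assms(2) by (metis prime_dvd_power primes_dvd_imp_eq)
qed

lemma power_card_finite_field:
  fixes x :: "'a::{field,finite}"
  shows "x ^ card (UNIV :: 'a set) = x"
proof (cases "x = 0")
  case False
  let ?U = "UNIV - {0 :: 'a}"
  have bij: "bij_betw ((*) x) ?U ?U"
  proof (rule bij_betw_byWitness[where f' = "\<lambda>y. y / x"])
    show "\<forall>y\<in>?U. x * y / x = y" "\<forall>y\<in>?U. x * (y / x) = y"
      using False by simp_all
    show "(*) x ` ?U \<subseteq> ?U" "(\<lambda>y. y / x) ` ?U \<subseteq> ?U"
      using False by auto
  qed
  have "(\<Prod>y\<in>?U. x * y) = \<Prod>?U"
    using prod.reindex_bij_betw[OF bij, of "\<lambda>y. y"] by simp
  then have "x ^ card ?U * \<Prod>?U = 1 * \<Prod>?U"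
    by (simp add: prod.distrib)
  moreover have "\<Prod>?U \<noteq> 0"
    by simp
  ultimately have "x ^ card ?U = 1"
    by (simp only: mult_cancel_right) simp
  moreover have "card (UNIV :: 'a set) = Suc (card ?U)"
    using card_Suc_Diff1[of "UNIV :: 'a set" 0] by simp
  ultimately show ?thesis
    by (simp only: power_Suc mult_1_right)
qed (simp add: card_gt_0_iff zero_power)

section \<open>Inner products, Hamming distance and symbol-wise maps\<close>

lemma dotp_Nil_left [simp]: "dotp [] v = 0"
  by (simp add: dotp_def)

lemma dotp_Nil_right [simp]: "dotp u [] = 0"
  by (simp add: dotp_def)

lemma dotp_Cons [simp]: "dotp (a # u) (b # v) = a * b + dotp u v"
  by (simp add: dotp_def)

lemma dotp_append:
  "length u = length v \<Longrightarrow> dotp (u @ u') (v @ v') = dotp u v + dotp u' v'"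
  by (induction u v rule: list_induct2) (simp_all add: algebra_simps)

lemma dotp_add_left:
  "length u = length v \<Longrightarrow> length v = length w \<Longrightarrow> dotp (map2 (+) u v) w = dotp u w + dotp v w"
  by (induction u v w rule: list_induct3) (simp_all add: algebra_simps)

lemma dotp_add_right:
  "length u = length v \<Longrightarrow> length v = length w \<Longrightarrow> dotp w (map2 (+) u v) = dotp w u + dotp w v"
  by (induction u v w rule: list_induct3) (simp_all add: algebra_simps)

lemma dotp_scale_left: "dotp (map ((*) c) u) w = c * dotp u w"
proof (induction u arbitrary: w)
  case (Cons a u)
  then show ?case by (cases w) (simp_all add: algebra_simps)
qed simp

lemma dotp_scale_right: "dotp w (map ((*) c) u) = c * dotp w u"
proof (induction u arbitrary: w)
  case (Cons a u)
  then show ?case by (cases w) (simp_all add: algebra_simps)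
qed simp

lemma dotp_replicate_zero_right [simp]: "dotp u (replicate m 0) = 0"
proof (induction u arbitrary: m)
  case (Cons a u)
  then show ?case by (cases m) simp_all
qed simp

lemma dotp_eq_sum_nth: "length u = length v \<Longrightarrow> dotp u v = (\<Sum>i<length u. u ! i * v ! i)"
proof (induction u v rule: list_induct2)
  case (Cons x xs y ys)
  then show ?case
    by (simp add: sum.lessThan_Suc_shift del: sum.lessThan_Suc)
qed simp

lemma pi_tensor_Nil [simp]: "pi_tensor \<pi> [] = []"
  by (simp add: pi_tensor_def)

lemma pi_tensor_Cons [simp]: "pi_tensor \<pi> (x # c) = \<pi> x @ pi_tensor \<pi> c"
  by (simp add: pi_tensor_def)

lemma length_pi_tensor: "(\<And>x. length (\<pi> x) = n) \<Longrightarrow> length (pi_tensor \<pi> c) = n * length c"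
  by (induction c) simp_all

lemma pi_tensor_replicate: "\<pi> z = replicate n 0 \<Longrightarrow> pi_tensor \<pi> (replicate m z) = replicate (n * m) 0"
  by (induction m) (simp_all add: replicate_add[symmetric] add.commute)

lemma inj_on_pi_tensor:
  assumes "\<And>x. length (\<pi> x) = n" and "inj \<pi>" and "\<forall>c\<in>C. length c = L"
  shows "inj_on (pi_tensor \<pi>) C"
proof -
  have "c = d" if "length c = length d" "pi_tensor \<pi> c = pi_tensor \<pi> d" for c d
    using that
  proof (induction c d rule: list_induct2)
    case (Cons x xs y ys)
    then have "\<pi> x = \<pi> y" "pi_tensor \<pi> xs = pi_tensor \<pi> ys"
      using assms(1) by (simp_all add: append_eq_append_conv)
    then show ?case
      using Cons.IH assms(2) by (simp add: inj_eq)
  qed simp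
  then show ?thesis
    using assms(3) by (auto intro: inj_onI)
qed

lemma hamming_dist_Nil [simp]: "hamming_dist [] v = 0"
  by (simp add: hamming_dist_def)

lemma hamming_dist_Cons:
  "hamming_dist (x # u) (y # v) = (if x = y then 0 else 1) + hamming_dist u v"
proof -
  have "{i. i < length (x # u) \<and> (x # u) ! i \<noteq> (y # v) ! i}
      = (if x = y then {} else {0}) \<union> Suc ` {i. i < length u \<and> u ! i \<noteq> v ! i}"
    by (auto simp: less_Suc_eq_0_disj)
  then show ?thesis
    unfolding hamming_dist_def by (simp add: card_image)
qed

lemma hamming_dist_append:
  "length u = length v \<Longrightarrow> hamming_dist (u @ u') (v @ v') = hamming_dist u v + hamming_dist u' v'"
  by (induction u v rule: list_induct2) (simp_all add: hamming_dist_Cons)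

lemma hamming_dist_pi_tensor:
  assumes "\<And>x. length (\<pi> x) = n" and "\<And>x y. x \<noteq> y \<Longrightarrow> \<delta> \<le> hamming_dist (\<pi> x) (\<pi> y)"
  shows "length c = length d \<Longrightarrow> \<delta> * hamming_dist c d \<le> hamming_dist (pi_tensor \<pi> c) (pi_tensor \<pi> d)"
proof (induction c d rule: list_induct2)
  case (Cons x xs y ys)
  have "\<delta> * (if x = y then 0 else 1) \<le> hamming_dist (\<pi> x) (\<pi> y)"
    using assms(2) by simp
  then show ?case
    using Cons assms(1) by (simp add: hamming_dist_Cons hamming_dist_append distrib_left)
qed simp

lemma finite_hamming_dists:
  "finite C \<Longrightarrow> finite {hamming_dist x y | x y. x \<in> C \<and> y \<in> C \<and> x \<noteq> y}"
  by (rule finite_subset[of _ "(\<lambda>(x, y). hamming_dist x y) ` (C \<times> C)"]) auto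

lemma min_dist_le:
  assumes "finite C" "x \<in> C" "y \<in> C" "x \<noteq> y"
  shows "min_dist C \<le> hamming_dist x y"
  unfolding min_dist_def using assms finite_hamming_dists[OF assms(1)] by (intro Min_le) auto

lemma le_min_dist:
  assumes "finite C" "x \<in> C" "y \<in> C" "x \<noteq> y"
    and "\<And>x y. x \<in> C \<Longrightarrow> y \<in> C \<Longrightarrow> x \<noteq> y \<Longrightarrow> \<delta> \<le> hamming_dist x y"
  shows "\<delta> \<le> min_dist C"
  unfolding min_dist_def using assms finite_hamming_dists[OF assms(1)] by (subst Min_ge_iff) auto

lemma min_dist_pi_tensor_image:
  fixes \<pi> :: "'b::finite \<Rightarrow> 'a list"
  assumes len: "\<And>x. length (\<pi> x) = n" and "inj \<pi>"
    and C: "finite C" "\<forall>c\<in>C. length c = L" and "c \<in> C" "d \<in> C" "c \<noteq> d"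
  shows "min_dist (range \<pi>) * min_dist C \<le> min_dist (pi_tensor \<pi> ` C)"
proof -
  have inj: "inj_on (pi_tensor \<pi>) C"
    by (rule inj_on_pi_tensor[OF len \<open>inj \<pi>\<close> C(2)])
  have \<pi>: "min_dist (range \<pi>) \<le> hamming_dist (\<pi> x) (\<pi> y)" if "x \<noteq> y" for x y
    using that \<open>inj \<pi>\<close> by (intro min_dist_le) (auto dest: injD)
  show ?thesis
  proof (rule le_min_dist)
    show "pi_tensor \<pi> c \<noteq> pi_tensor \<pi> d"
      using inj \<open>c \<in> C\<close> \<open>d \<in> C\<close> \<open>c \<noteq> d\<close> by (auto dest: inj_onD)
    fix x y
    assume "x \<in> pi_tensor \<pi> ` C" "y \<in> pi_tensor \<pi> ` C" "x \<noteq> y"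
    then obtain c' d' where "c' \<in> C" "d' \<in> C" "c' \<noteq> d'"
      and xy: "x = pi_tensor \<pi> c'" "y = pi_tensor \<pi> d'"
      by blast
    then have "min_dist (range \<pi>) * min_dist C \<le> min_dist (range \<pi>) * hamming_dist c' d'"
      using C(1) by (simp add: min_dist_le)
    also have "\<dots> \<le> hamming_dist x y"
      unfolding xy using C(2) \<open>c' \<in> C\<close> \<open>d' \<in> C\<close> by (intro hamming_dist_pi_tensor[OF len \<pi>]) auto
    finally show "min_dist (range \<pi>) * min_dist C \<le> hamming_dist x y" .
  qed (use assms in auto)
qed

section \<open>Isometries\<close>

lemma Fq_linear_zero:
  assumes "Fq_linear emb n \<pi>" and "ring_hom_fun emb"
  shows "\<pi> 0 = replicate n 0"
proof -
  have "\<pi> (emb 0 * 0) = map ((*) 0) (\<pi> 0)" and "length (\<pi> 0) = n"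
    using assms(1) unfolding Fq_linear_def by blast+
  moreover have "map ((*) 0) xs = replicate (length xs) 0" for xs :: "'a list"
    by (induction xs) simp_all
  ultimately show ?thesis
    by (simp add: ring_hom_fun_zero[OF assms(2)])
qed

lemma isometry_trace_nondegenerate:
  fixes emb :: "'a::field \<Rightarrow> 'b::field" and z :: 'b
  assumes "is_isometry emb q s n \<pi>" and "s > 0" and "\<And>l. trace_ext q s (l * z) = 0"
  shows "z = 0"
proof (rule ccontr)
  assume "z \<noteq> 0"
  obtain e e' :: "nat \<Rightarrow> 'b" where "\<forall>i<s. \<forall>j<s. trace_ext q s (e i * e' j) = (if i = j then 1 else 0)"
    using assms(1) unfolding is_isometry_def by blast
  then have "trace_ext q s (e 0 * e' 0) = 1"
    using \<open>s > 0\<close> by simp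
  moreover have "e 0 * e' 0 = (e 0 * e' 0 / z) * z"
    using \<open>z \<noteq> 0\<close> by simp
  ultimately show False
    using assms(3)[of "e 0 * e' 0 / z"] by simp
qed

locale Fq_subfield =
  fixes emb :: "'a::{field,finite} \<Rightarrow> 'b::field" and p k q :: nat
  assumes emb: "ring_hom_fun emb" and prime: "prime p" and q: "q = p ^ k"
    and card: "card (UNIV :: 'a set) = q" and CHAR: "CHAR('b) = p"
begin

lemma trace_ext_add: "trace_ext q s (x + y :: 'b) = trace_ext q s x + trace_ext q s y"
proof -
  have "(x + y) ^ (q ^ i) = x ^ (q ^ i) + y ^ (q ^ i)" for i
    by (rule freshmans_dream'[where n = "k * i"]) (simp_all add: CHAR prime q power_mult)
  then show ?thesis
    unfolding trace_ext_def by (simp add: sum.distrib)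
qed

lemma trace_ext_zero: "trace_ext q s (0 :: 'b) = 0"
  using trace_ext_add[of s 0 0] by (metis add.right_neutral add_left_cancel)

lemma trace_ext_scale: "trace_ext q s (emb c * x :: 'b) = emb c * trace_ext q s x"
proof -
  have "c ^ q = c"
    using power_card_finite_field[of c] by (simp add: card)
  then have "c ^ (q ^ i) = c" for i
    by (induction i) (simp_all add: power_mult)
  then have "(emb c * x) ^ (q ^ i) = emb c * x ^ (q ^ i)" for i
    by (simp add: power_mult_distrib flip: ring_hom_fun_power[OF emb])
  then show ?thesis
    unfolding trace_ext_def by (simp add: sum_distrib_left)
qed

lemma Fq_linear_map_eq_on_basis:
  fixes F G :: "'b \<Rightarrow> 'b"
  assumes F: "\<And>x y. F (x + y) = F x + F y" "\<And>c x. F (emb c * x) = emb c * F x"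
    and G: "\<And>x y. G (x + y) = G x + G y" "\<And>c x. G (emb c * x) = emb c * G x"
    and "is_Fq_basis emb s e" and "\<forall>i<s. F (e i) = G (e i)"
  shows "F x = G x"
proof -
  have sum: "H (\<Sum>i<s. f i) = (\<Sum>i<s. H (f i))" if "\<And>x y. H (x + y) = H x + H y" for H :: "'b \<Rightarrow> 'b" and f
  proof -
    have "H 0 = 0"
      using that[of 0 0] by (metis add.right_neutral add_left_cancel)
    from sum_comp_morphism[of H f "{..<s}", OF this that] show ?thesis
      by (simp add: comp_def)
  qed
  obtain c where x: "x = (\<Sum>i<s. emb (c i) * e i)"
    using ex1_implies_ex[OF assms(5)[unfolded is_Fq_basis_def, rule_format, of x]] by blast
  have "F x = (\<Sum>i<s. emb (c i) * F (e i))"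
    unfolding x sum[of F, OF F(1)] F(2) ..
  also have "\<dots> = (\<Sum>i<s. emb (c i) * G (e i))"
    using assms(6) by simp
  also have "\<dots> = G x"
    unfolding x sum[of G, OF G(1)] G(2) ..
  finally show ?thesis .
qed

text \<open>Both sides are \<open>\<bbbF>\<^sub>q\<close>-bilinear in \<open>x\<close> and \<open>y\<close>, and they agree on the pairs of
  dual basis vectors.\<close>

lemma isometry_dotp:
  assumes iso: "is_isometry emb q s n \<pi>"
  shows "emb (dotp (\<pi> x) (\<pi> y)) = trace_ext q s (x * y)"
proof -
  have len: "length (\<pi> z) = n"
    and add: "\<pi> (z + w) = map2 (+) (\<pi> z) (\<pi> w)"
    and scale: "\<pi> (emb c * z) = map ((*) c) (\<pi> z)" for z w c
    using iso unfolding is_isometry_def Fq_linear_def by blast+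
  obtain e e' where basis: "is_Fq_basis emb s e" "is_Fq_basis emb s e'"
    and trace: "\<forall>i<s. \<forall>j<s. trace_ext q s (e i * e' j) = (if i = j then 1 else 0)"
    and dotp: "\<forall>i<s. \<forall>j<s. dotp (\<pi> (e i)) (\<pi> (e' j)) = (if i = j then 1 else 0)"
    using iso unfolding is_isometry_def by blast
  have on_dual_basis: "emb (dotp (\<pi> z) (\<pi> (e' j))) = trace_ext q s (z * e' j)" if "j < s" for z j
  proof (rule Fq_linear_map_eq_on_basis[where F = "\<lambda>z. emb (dotp (\<pi> z) (\<pi> (e' j)))"
        and G = "\<lambda>z. trace_ext q s (z * e' j)", OF _ _ _ _ basis(1)])
    show "emb (dotp (\<pi> (x + y)) (\<pi> (e' j)))
        = emb (dotp (\<pi> x) (\<pi> (e' j))) + emb (dotp (\<pi> y) (\<pi> (e' j)))" for x y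
      by (simp add: add dotp_add_left len ring_hom_fun_add[OF emb])
    show "emb (dotp (\<pi> (emb c * x)) (\<pi> (e' j))) = emb c * emb (dotp (\<pi> x) (\<pi> (e' j)))" for c x
      by (simp add: scale dotp_scale_left ring_hom_fun_mult[OF emb])
    show "trace_ext q s ((x + y) * e' j) = trace_ext q s (x * e' j) + trace_ext q s (y * e' j)" for x y
      by (simp add: distrib_right trace_ext_add)
    show "trace_ext q s (emb c * x * e' j) = emb c * trace_ext q s (x * e' j)" for c x
      by (simp add: mult.assoc trace_ext_scale)
    show "\<forall>i<s. emb (dotp (\<pi> (e i)) (\<pi> (e' j))) = trace_ext q s (e i * e' j)"
      using trace dotp that by (simp add: ring_hom_fun_one[OF emb] ring_hom_fun_zero[OF emb])
  qed
  show ?thesis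
  proof (rule Fq_linear_map_eq_on_basis[where F = "\<lambda>y. emb (dotp (\<pi> x) (\<pi> y))"
        and G = "\<lambda>y. trace_ext q s (x * y)", OF _ _ _ _ basis(2)])
    show "emb (dotp (\<pi> x) (\<pi> (y + z))) = emb (dotp (\<pi> x) (\<pi> y)) + emb (dotp (\<pi> x) (\<pi> z))" for y z
      by (simp add: add dotp_add_right len ring_hom_fun_add[OF emb])
    show "emb (dotp (\<pi> x) (\<pi> (emb c * y))) = emb c * emb (dotp (\<pi> x) (\<pi> y))" for c y
      by (simp add: scale dotp_scale_right ring_hom_fun_mult[OF emb])
    show "trace_ext q s (x * (y + z)) = trace_ext q s (x * y) + trace_ext q s (x * z)" for y z
      by (simp add: distrib_left trace_ext_add)
    show "trace_ext q s (x * (emb c * y)) = emb c * trace_ext q s (x * y)" for c y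
      by (simp only: mult.left_commute[of x "emb c" y] trace_ext_scale)
    show "\<forall>j<s. emb (dotp (\<pi> x) (\<pi> (e' j))) = trace_ext q s (x * e' j)"
      using on_dual_basis by blast
  qed
qed

lemma pi_tensor_dotp:
  assumes "is_isometry emb q s n \<pi>"
  shows "length c = length d \<Longrightarrow>
    emb (dotp (pi_tensor \<pi> c) (pi_tensor \<pi> d)) = trace_ext q s (dotp c d)"
proof (induction c d rule: list_induct2)
  case Nil
  show ?case
    by (simp add: ring_hom_fun_zero[OF emb] trace_ext_zero)
next
  case (Cons x xs y ys)
  have "length (\<pi> z) = n" for z
    using assms unfolding is_isometry_def Fq_linear_def by blast
  then show ?case
    using Cons isometry_dotp[OF assms]
    by (simp add: dotp_append ring_hom_fun_add[OF emb] trace_ext_add)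
qed

lemma isometry_inj:
  assumes "is_isometry emb q s n \<pi>" and "s > 0"
  shows "inj \<pi>"
proof (rule injI)
  fix x y
  assume "\<pi> x = \<pi> y"
  then have "trace_ext q s (x * l) = trace_ext q s (y * l)" for l
    using isometry_dotp[OF assms(1), of x l] isometry_dotp[OF assms(1), of y l] by simp
  then have "trace_ext q s (l * (x - y)) = 0" for l
    using trace_ext_add[of s "l * (x - y)" "y * l"] by (simp add: algebra_simps)
  then show "x = y"
    using isometry_trace_nondegenerate[OF assms] by (metis right_minus_eq)
qed

lemma is_LCD_pi_tensor_image:
  assumes iso: "is_isometry emb q s n \<pi>" and "s > 0"
    and length: "\<forall>c\<in>C. length c = L" and scale: "\<And>l c. c \<in> C \<Longrightarrow> map ((*) l) c \<in> C"
    and LCD: "is_LCD L C"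
  shows "is_LCD (n * L) (pi_tensor \<pi> ` C)"
proof -
  have len: "length (\<pi> x) = n" for x
    using iso unfolding is_isometry_def Fq_linear_def by blast
  have zero: "pi_tensor \<pi> (replicate L 0) = replicate (n * L) 0"
    using Fq_linear_zero[OF _ emb] iso unfolding is_isometry_def by (blast intro: pi_tensor_replicate)
  have "replicate L 0 \<in> C"
    using LCD unfolding is_LCD_def by blast
  then have "replicate (n * L) 0 \<in> pi_tensor \<pi> ` C"
    by (metis zero image_eqI)
  then have "replicate (n * L) 0 \<in> pi_tensor \<pi> ` C \<inter> dual_code (n * L) (pi_tensor \<pi> ` C)"
    unfolding dual_code_def by simp
  moreover have "y = replicate (n * L) 0"
    if y: "y \<in> pi_tensor \<pi> ` C" "y \<in> dual_code (n * L) (pi_tensor \<pi> ` C)" for y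
  proof -
    obtain c where c: "c \<in> C" "y = pi_tensor \<pi> c"
      using y(1) by blast
    have "dotp d c = 0" if "d \<in> C" for d
    proof (rule isometry_trace_nondegenerate[OF iso \<open>s > 0\<close>])
      fix l
      have "dotp (pi_tensor \<pi> (map ((*) l) d)) y = 0"
        using y(2) scale[OF \<open>d \<in> C\<close>] unfolding dual_code_def by blast
      then have "emb (dotp (pi_tensor \<pi> (map ((*) l) d)) (pi_tensor \<pi> c)) = 0"
        using c(2) ring_hom_fun_zero[OF emb] by simp
      moreover have "emb (dotp (pi_tensor \<pi> (map ((*) l) d)) (pi_tensor \<pi> c))
          = trace_ext q s (dotp (map ((*) l) d) c)"
        using length \<open>d \<in> C\<close> c(1) by (intro pi_tensor_dotp[OF iso]) simp
      ultimately show "trace_ext q s (l * dotp d c) = 0"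
        by (simp only: dotp_scale_left)
    qed
    then have "c \<in> C \<inter> dual_code L C"
      using c(1) length unfolding dual_code_def by simp
    then have "c = replicate L 0"
      using LCD unfolding is_LCD_def by blast
    then show ?thesis
      using c(2) zero by simp
  qed
  ultimately show ?thesis
    unfolding is_LCD_def by blast
qed

end

section \<open>The code \<open>hatC N a b\<close>\<close>

definition hat_enc :: "nat \<Rightarrow> 'b::field \<Rightarrow> 'b \<Rightarrow> 'b list \<Rightarrow> 'b list" where
  "hat_enc N a b u = u @ map (\<lambda>j. \<Sum>i<N. u ! i * tridiag a b i j) [0..<N]"

lemma hatC_eq_image: "hatC N a b = hat_enc N a b ` {u. length u = N}"
  unfolding hatC_def hat_enc_def by auto

lemma length_hat_enc: "length u = N \<Longrightarrow> length (hat_enc N a b u) = 2 * N"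
  unfolding hat_enc_def by simp

lemma hat_enc_inj: "length u = N \<Longrightarrow> length v = N \<Longrightarrow> hat_enc N a b u = hat_enc N a b v \<Longrightarrow> u = v"
  unfolding hat_enc_def by simp

lemma hat_enc_replicate_zero: "hat_enc N a b (replicate N 0) = replicate (2 * N) 0"
  unfolding hat_enc_def by (simp add: map_replicate_const mult_2 replicate_add)

lemma hat_enc_scale: "length u = N \<Longrightarrow> map ((*) l) (hat_enc N a b u) = hat_enc N a b (map ((*) l) u)"
  unfolding hat_enc_def by (simp add: sum_distrib_left mult.assoc)

lemma dotp_hat_enc:
  "length u = N \<Longrightarrow> length v = N \<Longrightarrow> dotp (hat_enc N a b u) (hat_enc N a b v) = dotp u v +
     (\<Sum>j<N. (\<Sum>i<N. u ! i * tridiag a b i j) * (\<Sum>i<N. v ! i * tridiag a b i j))"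
  unfolding hat_enc_def by (subst dotp_append) (simp_all add: dotp_eq_sum_nth)

lemma card_hatC: "card (hatC N a (b :: 'b::{field,finite})) = card (UNIV :: 'b set) ^ N"
proof -
  have "card (hatC N a b) = card {u :: 'b list. length u = N}"
    unfolding hatC_eq_image by (rule card_image) (auto intro: inj_onI hat_enc_inj)
  also have "{u :: 'b list. length u = N} = {u. set u \<subseteq> UNIV \<and> length u = N}"
    by simp
  finally show ?thesis
    by (simp only: card_lists_length_eq finite)
qed

lemma finite_hatC: "finite (hatC N a (b :: 'b::{field,finite}))"
  unfolding hatC_eq_image using finite_lists_length_eq[of "UNIV :: 'b set" N] by simp

lemma hatC_scale: "c \<in> hatC N a b \<Longrightarrow> map ((*) l) c \<in> hatC N a b"
  unfolding hatC_eq_image by (auto simp: hat_enc_scale)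

text \<open>Testing the dual condition against the encodings of the unit vectors gives
  \<open>(I + T T\<^sup>T) u = 0\<close>.\<close>

lemma hatC_dual_imp_kernel:
  fixes u :: "'b::field list"
  assumes "length u = N" and "hat_enc N a b u \<in> dual_code (2 * N) (hatC N a b)" and "k < N"
  shows "u ! k + (\<Sum>j<N. (\<Sum>i<N. u ! i * tridiag a b i j) * tridiag a b k j) = 0"
proof -
  define v where "v = map (\<lambda>i. if i = k then (1::'b) else 0) [0..<N]"
  have "length v = N"
    unfolding v_def by simp
  have "(\<Sum>i<N. v ! i * tridiag a b i j) = (\<Sum>i<N. if i = k then tridiag a b k j else 0)" for j
    by (rule sum.cong) (auto simp: v_def)
  then have row: "(\<Sum>i<N. v ! i * tridiag a b i j) = tridiag a b k j" for j
    using assms(3) by simp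
  have "dotp v u = (\<Sum>i<N. v ! i * u ! i)"
    using assms(1) \<open>length v = N\<close> by (simp add: dotp_eq_sum_nth)
  also have "\<dots> = (\<Sum>i<N. if i = k then u ! k else 0)"
    by (rule sum.cong) (auto simp: v_def)
  finally have "dotp v u = u ! k"
    using assms(3) by simp
  moreover have "dotp (hat_enc N a b v) (hat_enc N a b u) = 0"
    using assms(2) \<open>length v = N\<close> unfolding dual_code_def hatC_eq_image by blast
  ultimately show ?thesis
    using dotp_hat_enc[OF \<open>length v = N\<close> assms(1), of a b] row by (simp add: mult.commute)
qed

lemma hatC_dual_imp_hom_kernel:
  assumes h: "ring_hom_fun h" and "length u = N"
    and "hat_enc N a b u \<in> dual_code (2 * N) (hatC N a b)" and "k < N"
  shows "h (u ! k) + (\<Sum>j<N. (\<Sum>i<N. h (u ! i) * tridiag (h a) (h b) i j) * tridiag (h a) (h b) k j) = 0"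
proof -
  have "h (u ! k + (\<Sum>j<N. (\<Sum>i<N. u ! i * tridiag a b i j) * tridiag a b k j)) = 0"
    using hatC_dual_imp_kernel[OF assms(2-4)] by (simp add: ring_hom_fun_zero[OF h])
  then show ?thesis
    by (simp only: ring_hom_fun_add[OF h] ring_hom_fun_sum[OF h] ring_hom_fun_mult[OF h]
        ring_hom_fun_tridiag[OF h])
qed

lemma is_LCD_hatC:
  fixes h :: "'b::field \<Rightarrow> 'c::field" and a b :: 'b and \<theta> \<mu> :: 'c
  assumes h: "ring_hom_fun h" and "CHAR('c) = p" "prime p"
    and "b \<noteq> 0" and "N \<ge> 2"
    and "N + 1 = p ^ r * (m + 1)" and "\<not> p ^ (r + 1) dvd N + 1"
    and "\<theta> ^ (2 * (m + 1)) = 1" and "\<And>j. 0 < j \<Longrightarrow> j < 2 * (m + 1) \<Longrightarrow> \<theta> ^ j \<noteq> 1"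
    and "\<mu> ^ 2 = - 1"
    and S: "let S1 = {- \<mu> / h b + \<theta> ^ i + inverse \<theta> ^ i | i. 1 \<le> i \<and> i \<le> m}
                    \<union> {\<mu> / h b + \<theta> ^ i + inverse \<theta> ^ i | i. 1 \<le> i \<and> i \<le> m};
                S2 = {- \<mu> / h b + 2, - \<mu> / h b - 2, \<mu> / h b + 2, \<mu> / h b - 2};
                ab = h a / h b
            in (r = 0 \<longrightarrow> ab \<notin> S1) \<and>
               (r \<ge> 1 \<and> m = 0 \<longrightarrow> ab \<notin> S2) \<and>
               (r \<ge> 1 \<and> m \<ge> 1 \<longrightarrow> ab \<notin> S1 \<union> S2)"
  shows "is_LCD (2 * N) (hatC N a b)"
proof -
  have hb: "h b \<noteq> 0"
    using assms(4) ring_hom_fun_eq_0_iff[OF h] by simp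
  have "hat_enc N a b (replicate N 0) \<in> hatC N a b"
    unfolding hatC_eq_image by simp
  then have "replicate (2 * N) 0 \<in> hatC N a b"
    by (simp only: hat_enc_replicate_zero)
  then have "replicate (2 * N) 0 \<in> hatC N a b \<inter> dual_code (2 * N) (hatC N a b)"
    unfolding dual_code_def by simp
  moreover have "y = replicate (2 * N) 0"
    if y: "y \<in> hatC N a b" "y \<in> dual_code (2 * N) (hatC N a b)" for y
  proof -
    obtain u where u: "length u = N" "y = hat_enc N a b u"
      using y(1) unfolding hatC_eq_image by blast
    define U where "U k = h (u ! k)" for k
    have "hat_enc N a b u \<in> dual_code (2 * N) (hatC N a b)"
      using y(2) u(2) by simp
    then have kernel:
      "\<forall>k<N. U k + (\<Sum>j<N. (\<Sum>i<N. U i * tridiag (h a) (h b) i j) * tridiag (h a) (h b) k j) = 0"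
      unfolding U_def using hatC_dual_imp_hom_kernel[OF h u(1)] by blast
    have nonzero: "cheb ((h a - \<nu>) / h b) N \<noteq> 0" if "\<nu> = \<mu> \<or> \<nu> = - \<mu>" for \<nu>
      using cheb_shifted_quotient_nonzero[OF assms(2,3,6-9) hb S that] .
    have "\<not> (\<exists>k<N. U k \<noteq> 0)"
    proof
      assume "\<exists>k<N. U k \<noteq> 0"
      from one_plus_tridiag_sq_kernel_imp_cheb_zero[OF kernel assms(10) hb assms(5) this]
      show False
        using nonzero[of \<mu>] nonzero[of "- \<mu>"] by auto
    qed
    then have "u = replicate N 0"
      using u(1) ring_hom_fun_eq_0_iff[OF h] unfolding U_def by (intro nth_equalityI) auto
    then show ?thesis
      using u(2) hat_enc_replicate_zero by simp
  qed
  ultimately show ?thesis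
    unfolding is_LCD_def by blast
qed

lemma hatC_distinct_codewords:
  assumes "N > 0"
  shows "hat_enc N a b (replicate N 0) \<in> hatC N a b" "hat_enc N a b (replicate N 1) \<in> hatC N a b"
    "hat_enc N a b (replicate N 0) \<noteq> hat_enc N a b (replicate N 1)"
  using assms hat_enc_inj[of "replicate N 0" N "replicate N 1" a b] by (auto simp: hatC_eq_image)

theorem theorem3p3:
  fixes emb :: "'a::{field,finite} \<Rightarrow> 'b::{field,finite}"
    and h :: "'b \<Rightarrow> 'c::field"
    and p k q s n N r m :: nat
    and \<pi> :: "'b \<Rightarrow> 'a list"
    and a b :: 'b
    and \<theta> \<mu> :: 'c
  assumes p: "prime p" "odd p" and qdef: "q = p ^ k" "k \<ge> 1"
    and cardA: "card (UNIV :: 'a set) = q" and cardB: "card (UNIV :: 'b set) = q ^ s"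
    and emb: "ring_hom_fun emb"
    and h: "ring_hom_fun h"
    and s: "s \<ge> 2" and n: "n \<ge> s"
    and dpos: "d_max_iso emb q s n \<ge> 1"
    and iso: "is_isometry emb q s n \<pi>"
    and dmax: "min_dist (range \<pi>) = d_max_iso emb q s n"
    and b: "b \<noteq> 0" and N: "N \<ge> 2"
    and r1: "p ^ r dvd N + 1" and r2: "\<not> p ^ (r + 1) dvd N + 1"
    and mdef: "N + 1 = p ^ r * (m + 1)"
    and theta1: "\<theta> ^ (2 * (m + 1)) = 1"
    and theta2: "\<forall>j. 0 < j \<and> j < 2 * (m + 1) \<longrightarrow> \<theta> ^ j \<noteq> 1"
    and mu: "\<mu> ^ 2 = -1"
    and S: "let S1 = {- \<mu> / h b + \<theta> ^ i + inverse \<theta> ^ i | i. 1 \<le> i \<and> i \<le> m}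
                    \<union> {\<mu> / h b + \<theta> ^ i + inverse \<theta> ^ i | i. 1 \<le> i \<and> i \<le> m};
                S2 = {- \<mu> / h b + 2, - \<mu> / h b - 2, \<mu> / h b + 2, \<mu> / h b - 2};
                ab = h a / h b
            in (r = 0 \<longrightarrow> ab \<notin> S1) \<and>
               (r \<ge> 1 \<and> m = 0 \<longrightarrow> ab \<notin> S2) \<and>
               (r \<ge> 1 \<and> m \<ge> 1 \<longrightarrow> ab \<notin> S1 \<union> S2)"
  shows "let C = pi_tensor \<pi> ` hatC N a b
         in is_LCD (2 * n * N) C \<and>
            (\<forall>c\<in>C. length c = 2 * n * N) \<and>
            card C = q ^ (s * N) \<and>
            min_dist C \<ge> d_max_iso emb q s n * min_dist (hatC N a b)"
proof -
  have "CHAR('b) = p"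
    using CHAR_eq_prime_of_card[of p "k * s"] cardB qdef p(1) s by (simp add: power_mult)
  moreover from this have "CHAR('c) = p"
    using ring_hom_fun_CHAR[OF h] by simp
  ultimately interpret Fq_subfield emb p k q
    using emb p(1) qdef(1) cardA by unfold_locales
  have "s > 0" "N > 0"
    using s N by simp_all
  have len: "length (\<pi> x) = n" for x
    using iso unfolding is_isometry_def Fq_linear_def by blast
  have lenC: "\<forall>c\<in>hatC N a b. length c = 2 * N"
    by (auto simp: hatC_eq_image length_hat_enc)
  have "is_LCD (2 * N) (hatC N a b)"
    using is_LCD_hatC[OF h \<open>CHAR('c) = p\<close> p(1) b N mdef r2 theta1 _ mu S] theta2 by blast
  then have "is_LCD (2 * n * N) (pi_tensor \<pi> ` hatC N a b)"
    using is_LCD_pi_tensor_image[OF iso \<open>s > 0\<close> lenC hatC_scale] by (simp add: mult_ac)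
  moreover have "\<forall>c\<in>pi_tensor \<pi> ` hatC N a b. length c = 2 * n * N"
    using lenC length_pi_tensor[of \<pi>, OF len] by auto
  moreover have "card (pi_tensor \<pi> ` hatC N a b) = q ^ (s * N)"
    using card_image[OF inj_on_pi_tensor[OF len isometry_inj[OF iso \<open>s > 0\<close>] lenC]]
    by (simp add: card_hatC cardB power_mult)
  moreover have "d_max_iso emb q s n * min_dist (hatC N a b) \<le> min_dist (pi_tensor \<pi> ` hatC N a b)"
    using min_dist_pi_tensor_image[OF len isometry_inj[OF iso \<open>s > 0\<close>] finite_hatC lenC
        hatC_distinct_codewords[OF \<open>N > 0\<close>]] dmax by simp
  ultimately show ?thesis
    unfolding Let_def by blast
qed

end
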